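(* Let $(X_t)_{t\ge0}$ be a Markov process on $\mathbb{R}$ with semigroup $P_tg(x)=\mathbb{E}_x[g(X_t)]$ and extended generator $A$. 1. Let $h\in\mathcal D(P)$ and $x\in\mathbb{R}$. Suppose (i) $\lim_{|t-s|\to0}\mathbb{E}_x|X_s-X_t|^2=0$; (ii) for all $T>0$, $\sup_{0\le t\le T}\mathbb{E}_x|X_t|^4<\infty$; (iii) there is $C>0$ with $|h(y)-h(z)|\le C(1+y^2+z^2)|y-z|$ for all $y,z\in\mathbb{R}$. Then $s\mapsto P_sh(x)$ is continuous on $\mathbb{R}_+$. 2. Suppose (i) and (ii) hold and (iii)': $g\in\mathcal D'(A)$ and there is $C>0$ with $|Ag(y)-Ag(z)|\le C(1+y^2+z^2)|y-z|$ for all $y,z$. Then $s\mapsto P_sg(x)$ is differentiable on $\mathbb{R}_+$ and $\frac d{dt}P_tg(x)=P_tAg(x)$.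
   Context: $\mathcal D(P)$ is the set of measurable $g:\mathbb{R}\to\mathbb{R}$ with $\mathbb{E}_x|g(X_t)|<\infty$ for all $x,t$. The extended domain $\mathcal D'(A)$ is the set of $g\in\mathcal D(P)$ for which there is a measurable $Ag\in\mathcal D(P)$ such that $t\mapsto P_tAg(x)$ is continuous at $0$ and, for all $x\in\mathbb{R}$, $t\ge0$: $\mathbb{E}_x[g(X_t)]-g(x)=\mathbb{E}_x\int_0^tAg(X_s)ds$ and $\mathbb{E}_x\int_0^t|Ag(X_s)|ds<\infty$. *)

theory Defs
  imports "HOL-Probability.Probability"
begin

text \<open>A process on a common measurable space, with a family of probability laws
  M x (the law started at x), X t \<omega> the position at time t \<ge> 0.\<close>

definition natural_filtration :: "'a measure \<Rightarrow> (real \<Rightarrow> 'a \<Rightarrow> real) \<Rightarrow> real \<Rightarrow> 'a measure" where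
  "natural_filtration N X s =
     sigma (space N) {X u -` B \<inter> space N | u B. 0 \<le> u \<and> u \<le> s \<and> B \<in> sets borel}"

definition markov_process :: "(real \<Rightarrow> 'a measure) \<Rightarrow> (real \<Rightarrow> 'a \<Rightarrow> real) \<Rightarrow> bool" where
  "markov_process M X \<longleftrightarrow>
     (\<forall>x. prob_space (M x)) \<and>
     (\<forall>x y. sets (M x) = sets (M y)) \<and>
     (\<forall>x t. 0 \<le> t \<longrightarrow> X t \<in> borel_measurable (M x)) \<and>
     (\<forall>x. (\<lambda>(t, \<omega>). X t \<omega>) \<in> borel_measurable (restrict_space lborel {0..} \<Otimes>\<^sub>M M x)) \<and>
     (\<forall>x. AE \<omega> in M x. X 0 \<omega> = x) \<and>
     (\<forall>x s t f. 0 \<le> s \<longrightarrow> 0 \<le> t \<longrightarrow> f \<in> borel_measurable borel \<longrightarrow> (\<exists>B. \<forall>y. \<bar>f y\<bar> \<le> B) \<longrightarrow>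
        (AE \<omega> in M x. real_cond_exp (M x) (natural_filtration (M x) X s) (\<lambda>\<omega>. f (X (s + t) \<omega>)) \<omega>
                        = (\<integral>\<omega>'. f (X t \<omega>') \<partial>M (X s \<omega>))))"

definition semigroup :: "(real \<Rightarrow> 'a measure) \<Rightarrow> (real \<Rightarrow> 'a \<Rightarrow> real) \<Rightarrow> real \<Rightarrow> (real \<Rightarrow> real) \<Rightarrow> real \<Rightarrow> real" where
  "semigroup M X t g x = (\<integral>\<omega>. g (X t \<omega>) \<partial>M x)"

definition in_DP :: "(real \<Rightarrow> 'a measure) \<Rightarrow> (real \<Rightarrow> 'a \<Rightarrow> real) \<Rightarrow> (real \<Rightarrow> real) \<Rightarrow> bool" where
  "in_DP M X g \<longleftrightarrow> g \<in> borel_measurable borel \<and>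
     (\<forall>x t. 0 \<le> t \<longrightarrow> integrable (M x) (\<lambda>\<omega>. g (X t \<omega>)))"

definition ext_gen :: "(real \<Rightarrow> 'a measure) \<Rightarrow> (real \<Rightarrow> 'a \<Rightarrow> real) \<Rightarrow> (real \<Rightarrow> real) \<Rightarrow> (real \<Rightarrow> real) \<Rightarrow> bool" where
  "ext_gen M X g Ag \<longleftrightarrow> in_DP M X g \<and> in_DP M X Ag \<and>
     (\<forall>x. continuous (at 0 within {0..}) (\<lambda>t. semigroup M X t Ag x)) \<and>
     (\<forall>x t. 0 \<le> t \<longrightarrow>
        semigroup M X t g x - g x =
          (\<integral>\<omega>. set_lebesgue_integral lborel {0..t} (\<lambda>s. Ag (X s \<omega>)) \<partial>M x) \<and>
        (\<integral>\<^sup>+\<omega>. (\<integral>\<^sup>+s\<in>{0..t}. ennreal \<bar>Ag (X s \<omega>)\<bar> \<partial>lborel) \<partial>M x) < \<infinity>)"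

definition L2_continuous :: "(real \<Rightarrow> 'a measure) \<Rightarrow> (real \<Rightarrow> 'a \<Rightarrow> real) \<Rightarrow> real \<Rightarrow> bool" where
  "L2_continuous M X x \<longleftrightarrow>
     (\<forall>\<epsilon>>0. \<exists>\<delta>>0. \<forall>s t. 0 \<le> s \<longrightarrow> 0 \<le> t \<longrightarrow> \<bar>t - s\<bar> < \<delta> \<longrightarrow>
        (\<integral>\<^sup>+\<omega>. ennreal ((X s \<omega> - X t \<omega>)\<^sup>2) \<partial>M x) < ennreal \<epsilon>)"

definition bounded_4th_moments :: "(real \<Rightarrow> 'a measure) \<Rightarrow> (real \<Rightarrow> 'a \<Rightarrow> real) \<Rightarrow> real \<Rightarrow> bool" where
  "bounded_4th_moments M X x \<longleftrightarrow>
     (\<forall>T>0. (SUP t\<in>{0..T}. \<integral>\<^sup>+\<omega>. ennreal (\<bar>X t \<omega>\<bar> ^ 4) \<partial>M x) < \<infinity>)"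

end

theory Submission
  imports Defs
begin

(* The growth bound on h and Cauchy-Schwarz give
     |P_s h(x) - P_t h(x)|^2 <= 3 C^2 (1 + E_x |X_s|^4 + E_x |X_t|^4) E_x |X_s - X_t|^2,
   so the fourth moments (ii) and the L2-continuity (i) make s |-> P_s h(x) continuous.
   For part 2, Fubini turns Dynkin's formula into P_t g(x) = g(x) + int_0^t P_s Ag(x) ds;
   the integrand is continuous by part 1 applied to Ag, and the fundamental theorem of
   calculus gives the derivative. *)

lemma poly_weight_sq_le:
  fixes y z :: real
  shows "(1 + y\<^sup>2 + z\<^sup>2)\<^sup>2 \<le> 3 * (1 + \<bar>y\<bar> ^ 4 + \<bar>z\<bar> ^ 4)"
proof -
  have "(1 + a + b)\<^sup>2 \<le> 3 * (1 + a\<^sup>2 + b\<^sup>2)" for a b :: real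
    using sum_squares_ge_zero[of "a - 1" "b - 1"] sum_squares_ge_zero[of "a - b" 0]
    by (simp add: power2_eq_square algebra_simps)
  moreover have "\<bar>w\<bar> ^ 4 = (w\<^sup>2)\<^sup>2" for w :: real
    by (simp add: power_even_abs flip: power_mult)
  ultimately show ?thesis by metis
qed

lemma (in prob_space) expectation_diff_sq_le_moments:
  fixes h :: "real \<Rightarrow> real"
  assumes [measurable]: "random_variable borel Y" "random_variable borel Z"
    and integrable_Y: "integrable M (\<lambda>\<omega>. h (Y \<omega>))"
    and integrable_Z: "integrable M (\<lambda>\<omega>. h (Z \<omega>))"
    and growth: "\<forall>y z. \<bar>h y - h z\<bar> \<le> C * (1 + y\<^sup>2 + z\<^sup>2) * \<bar>y - z\<bar>"
  shows "ennreal (\<bar>expectation (\<lambda>\<omega>. h (Y \<omega>)) - expectation (\<lambda>\<omega>. h (Z \<omega>))\<bar>\<^sup>2)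
    \<le> ennreal (3 * C\<^sup>2) * (1 + (\<integral>\<^sup>+\<omega>. \<bar>Y \<omega>\<bar> ^ 4 \<partial>M) + (\<integral>\<^sup>+\<omega>. \<bar>Z \<omega>\<bar> ^ 4 \<partial>M))
        * (\<integral>\<^sup>+\<omega>. (Y \<omega> - Z \<omega>)\<^sup>2 \<partial>M)"
proof -
  define a where "a \<omega> = 1 + (Y \<omega>)\<^sup>2 + (Z \<omega>)\<^sup>2" for \<omega>
  have [measurable]: "a \<in> borel_measurable M" unfolding a_def by measurable
  have "0 \<le> a \<omega>" for \<omega> by (simp add: a_def)
  have "0 \<le> C" using growth[rule_format, of 1 0] by simp
  have "ennreal \<bar>expectation (\<lambda>\<omega>. h (Y \<omega>)) - expectation (\<lambda>\<omega>. h (Z \<omega>))\<bar>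
      \<le> (\<integral>\<^sup>+\<omega>. \<bar>h (Y \<omega>) - h (Z \<omega>)\<bar> \<partial>M)"
    using integral_norm_bound_ennreal[of M "\<lambda>\<omega>. h (Y \<omega>) - h (Z \<omega>)"] integrable_Y integrable_Z by simp
  also have "\<dots> \<le> (\<integral>\<^sup>+\<omega>. ennreal C * (ennreal (a \<omega>) * ennreal \<bar>Y \<omega> - Z \<omega>\<bar>) \<partial>M)"
  proof (intro nn_integral_mono)
    fix \<omega>
    have "ennreal \<bar>h (Y \<omega>) - h (Z \<omega>)\<bar> \<le> ennreal (C * (a \<omega> * \<bar>Y \<omega> - Z \<omega>\<bar>))"
      using growth by (intro ennreal_leI) (simp add: a_def mult.assoc)
    also have "\<dots> = ennreal C * (ennreal (a \<omega>) * ennreal \<bar>Y \<omega> - Z \<omega>\<bar>)"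
      using \<open>0 \<le> C\<close> \<open>0 \<le> a \<omega>\<close> by (simp add: ennreal_mult)
    finally show "ennreal \<bar>h (Y \<omega>) - h (Z \<omega>)\<bar> \<le> ennreal C * (ennreal (a \<omega>) * ennreal \<bar>Y \<omega> - Z \<omega>\<bar>)" .
  qed
  also have "\<dots> = ennreal C * (\<integral>\<^sup>+\<omega>. ennreal (a \<omega>) * ennreal \<bar>Y \<omega> - Z \<omega>\<bar> \<partial>M)"
    by (simp add: nn_integral_cmult)
  finally have diff_le_weighted_L1: "ennreal \<bar>expectation (\<lambda>\<omega>. h (Y \<omega>)) - expectation (\<lambda>\<omega>. h (Z \<omega>))\<bar>
      \<le> ennreal C * (\<integral>\<^sup>+\<omega>. ennreal (a \<omega>) * ennreal \<bar>Y \<omega> - Z \<omega>\<bar> \<partial>M)" .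
  have weight_moment: "(\<integral>\<^sup>+\<omega>. ennreal (a \<omega>) ^ 2 \<partial>M)
      \<le> ennreal 3 * (1 + (\<integral>\<^sup>+\<omega>. \<bar>Y \<omega>\<bar> ^ 4 \<partial>M) + (\<integral>\<^sup>+\<omega>. \<bar>Z \<omega>\<bar> ^ 4 \<partial>M))"
  proof -
    have "(\<integral>\<^sup>+\<omega>. ennreal (a \<omega>) ^ 2 \<partial>M)
        \<le> (\<integral>\<^sup>+\<omega>. ennreal 3 * (1 + ennreal (\<bar>Y \<omega>\<bar> ^ 4) + ennreal (\<bar>Z \<omega>\<bar> ^ 4)) \<partial>M)"
    proof (intro nn_integral_mono)
      fix \<omega>
      have "ennreal (a \<omega>) ^ 2 = ennreal ((a \<omega>)\<^sup>2)"
        using \<open>0 \<le> a \<omega>\<close> by (rule ennreal_power)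
      also have "\<dots> \<le> ennreal (3 * (1 + \<bar>Y \<omega>\<bar> ^ 4 + \<bar>Z \<omega>\<bar> ^ 4))"
        unfolding a_def by (intro ennreal_leI poly_weight_sq_le)
      also have "\<dots> = ennreal 3 * (1 + ennreal (\<bar>Y \<omega>\<bar> ^ 4) + ennreal (\<bar>Z \<omega>\<bar> ^ 4))"
        by (simp add: ennreal_mult ennreal_plus)
      finally show "ennreal (a \<omega>) ^ 2 \<le> ennreal 3 * (1 + ennreal (\<bar>Y \<omega>\<bar> ^ 4) + ennreal (\<bar>Z \<omega>\<bar> ^ 4))" .
    qed
    then show ?thesis
      by (simp add: nn_integral_add nn_integral_cmult emeasure_space_1)
  qed
  have "ennreal (\<bar>expectation (\<lambda>\<omega>. h (Y \<omega>)) - expectation (\<lambda>\<omega>. h (Z \<omega>))\<bar>\<^sup>2)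
      = ennreal \<bar>expectation (\<lambda>\<omega>. h (Y \<omega>)) - expectation (\<lambda>\<omega>. h (Z \<omega>))\<bar> ^ 2"
    by (simp add: ennreal_power)
  also have "\<dots> \<le> ennreal C ^ 2 * (\<integral>\<^sup>+\<omega>. ennreal (a \<omega>) * ennreal \<bar>Y \<omega> - Z \<omega>\<bar> \<partial>M) ^ 2"
    using power_mono[OF diff_le_weighted_L1, of 2] by (simp add: power_mult_distrib)
  also have "\<dots> \<le> ennreal C ^ 2 * ((\<integral>\<^sup>+\<omega>. ennreal (a \<omega>) ^ 2 \<partial>M) * (\<integral>\<^sup>+\<omega>. ennreal \<bar>Y \<omega> - Z \<omega>\<bar> ^ 2 \<partial>M))"
    by (intro mult_left_mono Cauchy_Schwarz_nn_integral) auto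
  also have "\<dots> \<le> ennreal C ^ 2 * (ennreal 3 * (1 + (\<integral>\<^sup>+\<omega>. \<bar>Y \<omega>\<bar> ^ 4 \<partial>M) + (\<integral>\<^sup>+\<omega>. \<bar>Z \<omega>\<bar> ^ 4 \<partial>M))
      * (\<integral>\<^sup>+\<omega>. (Y \<omega> - Z \<omega>)\<^sup>2 \<partial>M))"
    using weight_moment by (intro mult_left_mono) (auto simp: ennreal_power intro: mult_right_mono)
  also have "\<dots> = ennreal (3 * C\<^sup>2) * (1 + (\<integral>\<^sup>+\<omega>. \<bar>Y \<omega>\<bar> ^ 4 \<partial>M) + (\<integral>\<^sup>+\<omega>. \<bar>Z \<omega>\<bar> ^ 4 \<partial>M))
      * (\<integral>\<^sup>+\<omega>. (Y \<omega> - Z \<omega>)\<^sup>2 \<partial>M)"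
    using \<open>0 \<le> C\<close> by (simp add: ennreal_mult ennreal_power algebra_simps)
  finally show ?thesis .
qed

lemma bounded_4th_momentsE:
  assumes "bounded_4th_moments M X x" and "0 < T"
  obtains K where "0 \<le> K"
    and "\<And>t. 0 \<le> t \<Longrightarrow> t \<le> T \<Longrightarrow> (\<integral>\<^sup>+\<omega>. \<bar>X t \<omega>\<bar> ^ 4 \<partial>M x) \<le> ennreal K"
proof -
  define S where "S = (SUP t\<in>{0..T}. \<integral>\<^sup>+\<omega>. \<bar>X t \<omega>\<bar> ^ 4 \<partial>M x)"
  have "S < \<infinity>"
    using assms by (simp add: bounded_4th_moments_def S_def)
  then obtain K where "0 \<le> K" "S = ennreal K"
    by (cases S rule: ennreal_cases) auto
  moreover have "(\<integral>\<^sup>+\<omega>. \<bar>X t \<omega>\<bar> ^ 4 \<partial>M x) \<le> S" if "0 \<le> t" "t \<le> T" for t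
    unfolding S_def using that by (intro SUP_upper) auto
  ultimately show thesis using that by auto
qed

lemma semigroup_diff_sq_le:
  fixes M :: "real \<Rightarrow> 'a measure" and X :: "real \<Rightarrow> 'a \<Rightarrow> real"
  assumes mp: "markov_process M X" and hD: "in_DP M X h"
    and growth: "\<forall>y z. \<bar>h y - h z\<bar> \<le> C * (1 + y\<^sup>2 + z\<^sup>2) * \<bar>y - z\<bar>"
    and "0 \<le> s" "0 \<le> t" "0 \<le> K"
    and moment_s: "(\<integral>\<^sup>+\<omega>. \<bar>X s \<omega>\<bar> ^ 4 \<partial>M x) \<le> ennreal K"
    and moment_t: "(\<integral>\<^sup>+\<omega>. \<bar>X t \<omega>\<bar> ^ 4 \<partial>M x) \<le> ennreal K"
  shows "ennreal (\<bar>semigroup M X s h x - semigroup M X t h x\<bar>\<^sup>2)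
    \<le> ennreal (3 * C\<^sup>2 * (1 + 2 * K)) * (\<integral>\<^sup>+\<omega>. (X s \<omega> - X t \<omega>)\<^sup>2 \<partial>M x)"
proof -
  interpret prob_space "M x"
    using mp by (simp add: markov_process_def)
  have "1 + (\<integral>\<^sup>+\<omega>. \<bar>X s \<omega>\<bar> ^ 4 \<partial>M x) + (\<integral>\<^sup>+\<omega>. \<bar>X t \<omega>\<bar> ^ 4 \<partial>M x) \<le> 1 + ennreal K + ennreal K"
    using moment_s moment_t by (intro add_mono) auto
  also have "\<dots> = ennreal (1 + 2 * K)"
    using \<open>0 \<le> K\<close> by (simp add: ennreal_plus ennreal_mult' flip: mult_2)
  finally have "ennreal (3 * C\<^sup>2) * (1 + (\<integral>\<^sup>+\<omega>. \<bar>X s \<omega>\<bar> ^ 4 \<partial>M x) + (\<integral>\<^sup>+\<omega>. \<bar>X t \<omega>\<bar> ^ 4 \<partial>M x))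
      \<le> ennreal (3 * C\<^sup>2 * (1 + 2 * K))"
    using \<open>0 \<le> K\<close> by (simp add: ennreal_mult mult_left_mono)
  moreover have "ennreal (\<bar>semigroup M X s h x - semigroup M X t h x\<bar>\<^sup>2)
      \<le> ennreal (3 * C\<^sup>2) * (1 + (\<integral>\<^sup>+\<omega>. \<bar>X s \<omega>\<bar> ^ 4 \<partial>M x) + (\<integral>\<^sup>+\<omega>. \<bar>X t \<omega>\<bar> ^ 4 \<partial>M x))
        * (\<integral>\<^sup>+\<omega>. (X s \<omega> - X t \<omega>)\<^sup>2 \<partial>M x)"
    unfolding semigroup_def using mp hD \<open>0 \<le> s\<close> \<open>0 \<le> t\<close>
    by (intro expectation_diff_sq_le_moments growth) (auto simp: markov_process_def in_DP_def)
  ultimately show ?thesis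
    by (auto elim!: order.trans intro: mult_right_mono)
qed

lemma semigroup_continuous_on:
  fixes M :: "real \<Rightarrow> 'a measure" and X :: "real \<Rightarrow> 'a \<Rightarrow> real"
  assumes mp: "markov_process M X" and hD: "in_DP M X h"
    and L2: "L2_continuous M X x" and B4: "bounded_4th_moments M X x"
    and growth: "\<forall>y z. \<bar>h y - h z\<bar> \<le> C * (1 + y\<^sup>2 + z\<^sup>2) * \<bar>y - z\<bar>"
  shows "continuous_on {0..} (\<lambda>s. semigroup M X s h x)"
  unfolding continuous_on_iff
proof (intro ballI allI impI)
  fix t \<epsilon> :: real
  assume "t \<in> {0..}" and "0 < \<epsilon>"
  obtain K where "0 \<le> K"
    and moments: "\<And>s. 0 \<le> s \<Longrightarrow> s \<le> t + 1 \<Longrightarrow> (\<integral>\<^sup>+\<omega>. \<bar>X s \<omega>\<bar> ^ 4 \<partial>M x) \<le> ennreal K"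
    using bounded_4th_momentsE[OF B4, of "t + 1"] \<open>t \<in> {0..}\<close> by auto
  define c where "c = 3 * C\<^sup>2 * (1 + 2 * K) + 1"
  have "0 < c" using \<open>0 \<le> K\<close> by (simp add: c_def add_nonneg_pos)
  have "0 < \<epsilon>\<^sup>2 / c" using \<open>0 < \<epsilon>\<close> \<open>0 < c\<close> by simp
  with L2 obtain \<delta> where "0 < \<delta>" and \<delta>: "\<forall>s t. 0 \<le> s \<longrightarrow> 0 \<le> t \<longrightarrow> \<bar>t - s\<bar> < \<delta> \<longrightarrow>
      (\<integral>\<^sup>+\<omega>. (X s \<omega> - X t \<omega>)\<^sup>2 \<partial>M x) < ennreal (\<epsilon>\<^sup>2 / c)"
    unfolding L2_continuous_def by blast
  show "\<exists>d>0. \<forall>s\<in>{0..}. dist s t < d \<longrightarrow> dist (semigroup M X s h x) (semigroup M X t h x) < \<epsilon>"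
  proof (intro exI[of _ "min \<delta> 1"] conjI ballI impI)
    show "0 < min \<delta> 1" using \<open>0 < \<delta>\<close> by simp
  next
    fix s assume "s \<in> {0..}" and "dist s t < min \<delta> 1"
    then have "0 \<le> s" "s \<le> t + 1" "\<bar>t - s\<bar> < \<delta>"
      by (auto simp: dist_real_def)
    have "ennreal (\<bar>semigroup M X s h x - semigroup M X t h x\<bar>\<^sup>2)
        \<le> ennreal (3 * C\<^sup>2 * (1 + 2 * K)) * (\<integral>\<^sup>+\<omega>. (X s \<omega> - X t \<omega>)\<^sup>2 \<partial>M x)"
      using \<open>0 \<le> s\<close> \<open>s \<le> t + 1\<close> \<open>t \<in> {0..}\<close> \<open>0 \<le> K\<close>
      by (intro semigroup_diff_sq_le[OF mp hD growth] moments) auto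
    also have "\<dots> \<le> ennreal c * (\<integral>\<^sup>+\<omega>. (X s \<omega> - X t \<omega>)\<^sup>2 \<partial>M x)"
      unfolding c_def by (intro mult_right_mono ennreal_leI) auto
    also have "\<dots> < ennreal c * ennreal (\<epsilon>\<^sup>2 / c)"
      using \<delta> \<open>0 \<le> s\<close> \<open>t \<in> {0..}\<close> \<open>\<bar>t - s\<bar> < \<delta>\<close> \<open>0 < c\<close>
      by (intro ennreal_mult_strict_left_mono) auto
    also have "\<dots> = ennreal (\<epsilon>\<^sup>2)"
      using \<open>0 < c\<close> by (simp add: ennreal_mult[symmetric])
    finally have "\<bar>semigroup M X s h x - semigroup M X t h x\<bar>\<^sup>2 < \<epsilon>\<^sup>2"
      by (simp add: ennreal_less_iff)
    then show "dist (semigroup M X s h x) (semigroup M X t h x) < \<epsilon>"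
      using \<open>0 < \<epsilon>\<close> by (simp add: dist_real_def power2_less_imp_less)
  qed
qed

lemma markov_process_path_measurable:
  assumes "markov_process M X"
  shows "(\<lambda>(s, \<omega>). X (max 0 s) \<omega>) \<in> borel_measurable (lborel \<Otimes>\<^sub>M M x)"
proof -
  have path: "(\<lambda>(t, \<omega>). X t \<omega>) \<in> borel_measurable (restrict_space lborel {0..} \<Otimes>\<^sub>M M x)"
    using assms by (simp add: markov_process_def)
  have "(\<lambda>s::real. max 0 s) \<in> measurable lborel (restrict_space lborel {0..})"
    by (auto simp: measurable_lborel2 intro!: measurable_restrict_space2 borel_measurable_continuous_onI continuous_intros)
  then have "(\<lambda>p. (max 0 (fst p :: real), snd p)) \<in> measurable (lborel \<Otimes>\<^sub>M M x) (restrict_space lborel {0..} \<Otimes>\<^sub>M M x)"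
    by (intro measurable_Pair measurable_compose[OF measurable_fst]) auto
  from measurable_comp[OF this path] show ?thesis
    by (simp add: comp_def case_prod_beta')
qed

lemma expectation_time_integral_swap:
  fixes M :: "real \<Rightarrow> 'a measure" and X :: "real \<Rightarrow> 'a \<Rightarrow> real"
  assumes mp: "markov_process M X" and [measurable]: "f \<in> borel_measurable borel"
    and finite: "(\<integral>\<^sup>+\<omega>. (\<integral>\<^sup>+s\<in>{0..u}. ennreal \<bar>f (X s \<omega>)\<bar> \<partial>lborel) \<partial>M x) < \<infinity>"
  shows "(\<integral>\<omega>. (LINT s:{0..u}|lborel. f (X s \<omega>)) \<partial>M x) = (LINT s:{0..u}|lborel. semigroup M X s f x)"
proof -
  interpret prob_space "M x"
    using mp by (simp add: markov_process_def)
  interpret pair_sigma_finite lborel "M x"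
    by (simp add: pair_sigma_finite_def sigma_finite_measure_axioms lborel.sigma_finite_measure_axioms)
  define F where "F s \<omega> = indicator {0..u} s * f (X (max 0 s) \<omega>)" for s \<omega>
  have F_on_interval: "F s \<omega> = indicator {0..u} s * f (X s \<omega>)" for s \<omega>
    by (simp add: F_def split: split_indicator)
  have F_measurable[measurable]: "case_prod F \<in> borel_measurable (lborel \<Otimes>\<^sub>M M x)"
    using markov_process_path_measurable[OF mp, of x]
    unfolding F_def case_prod_beta' by measurable
  have "(\<integral>\<^sup>+p. ennreal (norm (case_prod F p)) \<partial>(lborel \<Otimes>\<^sub>M M x))
      = (\<integral>\<^sup>+\<omega>. (\<integral>\<^sup>+s\<in>{0..u}. ennreal \<bar>f (X s \<omega>)\<bar> \<partial>lborel) \<partial>M x)"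
    by (subst nn_integral_snd[symmetric]) (auto simp: F_on_interval intro!: nn_integral_cong split: split_indicator)
  then have "integrable (lborel \<Otimes>\<^sub>M M x) (case_prod F)"
    using finite by (intro integrableI_bounded) auto
  then have "(\<integral>\<omega>. (\<integral>s. F s \<omega> \<partial>lborel) \<partial>M x) = (\<integral>s. (\<integral>\<omega>. F s \<omega> \<partial>M x) \<partial>lborel)"
    by (rule Fubini_integral)
  then show ?thesis
    by (simp add: F_on_interval set_lebesgue_integral_def semigroup_def)
qed

lemma has_real_derivative_integral_atLeast:
  fixes G :: "real \<Rightarrow> real"
  assumes "continuous_on {a..} G" and "a \<le> t"
  shows "((\<lambda>u. integral {a..u} G) has_real_derivative G t) (at t within {a..})"
proof -
  have "((\<lambda>u. integral {a..u} G) has_real_derivative G t) (at t within {a..t + 1})"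
    using assms by (intro integral_has_real_derivative) (auto intro: continuous_on_subset)
  moreover have "at t within {a..} = at t within {a..t + 1}"
    by (rule at_within_nhd[where S = "{..<t + 1}"]) auto
  ultimately show ?thesis by simp
qed

lemma semigroup_eq_integral_generator:
  fixes M :: "real \<Rightarrow> 'a measure" and X :: "real \<Rightarrow> 'a \<Rightarrow> real"
  assumes mp: "markov_process M X" and gen: "ext_gen M X g Ag"
    and cont: "continuous_on {0..} (\<lambda>s. semigroup M X s Ag x)" and "0 \<le> u"
  shows "semigroup M X u g x = g x + integral {0..u} (\<lambda>s. semigroup M X s Ag x)"
proof -
  from gen \<open>0 \<le> u\<close> have "Ag \<in> borel_measurable borel"
    and semigroup_diff: "semigroup M X u g x - g x = (\<integral>\<omega>. (LINT s:{0..u}|lborel. Ag (X s \<omega>)) \<partial>M x)"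
    and finite: "(\<integral>\<^sup>+\<omega>. (\<integral>\<^sup>+s\<in>{0..u}. ennreal \<bar>Ag (X s \<omega>)\<bar> \<partial>lborel) \<partial>M x) < \<infinity>"
    by (auto simp: ext_gen_def in_DP_def)
  have "set_integrable lborel {0..u} (\<lambda>s. semigroup M X s Ag x)"
    using cont by (intro borel_integrable_atLeastAtMost') (auto intro: continuous_on_subset)
  with semigroup_diff expectation_time_integral_swap[OF mp \<open>Ag \<in> borel_measurable borel\<close> finite]
  show ?thesis
    by (simp add: set_borel_integral_eq_integral)
qed

lemma semigroup_has_real_derivative:
  fixes M :: "real \<Rightarrow> 'a measure" and X :: "real \<Rightarrow> 'a \<Rightarrow> real"
  assumes mp: "markov_process M X" and gen: "ext_gen M X g Ag"
    and cont: "continuous_on {0..} (\<lambda>s. semigroup M X s Ag x)" and "0 \<le> t"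
  shows "((\<lambda>s. semigroup M X s g x) has_real_derivative semigroup M X t Ag x) (at t within {0..})"
proof -
  have "((\<lambda>u. g x + integral {0..u} (\<lambda>s. semigroup M X s Ag x)) has_real_derivative semigroup M X t Ag x)
      (at t within {0..})"
    using DERIV_add[OF DERIV_const has_real_derivative_integral_atLeast[OF cont \<open>0 \<le> t\<close>]] by simp
  then show ?thesis
    using \<open>0 \<le> t\<close> semigroup_eq_integral_generator[OF mp gen cont]
    by (elim has_field_derivative_transform_within[OF _ zero_less_one]) auto
qed

theorem proposition5p2:
  fixes M :: "real \<Rightarrow> 'a measure" and X :: "real \<Rightarrow> 'a \<Rightarrow> real"
  assumes "markov_process M X"
  shows "(\<forall>h x C. in_DP M X h \<and> L2_continuous M X x \<and> bounded_4th_moments M X x \<and> C > 0 \<and>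
            (\<forall>y z. \<bar>h y - h z\<bar> \<le> C * (1 + y\<^sup>2 + z\<^sup>2) * \<bar>y - z\<bar>)
          \<longrightarrow> continuous_on {0..} (\<lambda>s. semigroup M X s h x))
       \<and> (\<forall>g Ag x C. L2_continuous M X x \<and> bounded_4th_moments M X x \<and> ext_gen M X g Ag \<and> C > 0 \<and>
            (\<forall>y z. \<bar>Ag y - Ag z\<bar> \<le> C * (1 + y\<^sup>2 + z\<^sup>2) * \<bar>y - z\<bar>)
          \<longrightarrow> (\<forall>t\<ge>0. ((\<lambda>s. semigroup M X s g x) has_real_derivative semigroup M X t Ag x)
                        (at t within {0..})))"
proof (intro conjI allI impI)
  fix h x C
  assume "in_DP M X h \<and> L2_continuous M X x \<and> bounded_4th_moments M X x \<and> C > 0 \<and>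
    (\<forall>y z. \<bar>h y - h z\<bar> \<le> C * (1 + y\<^sup>2 + z\<^sup>2) * \<bar>y - z\<bar>)"
  then show "continuous_on {0..} (\<lambda>s. semigroup M X s h x)"
    using semigroup_continuous_on[OF assms] by blast
next
  fix g Ag :: "real \<Rightarrow> real" and x C t :: real
  assume hyps: "L2_continuous M X x \<and> bounded_4th_moments M X x \<and> ext_gen M X g Ag \<and> C > 0 \<and>
    (\<forall>y z. \<bar>Ag y - Ag z\<bar> \<le> C * (1 + y\<^sup>2 + z\<^sup>2) * \<bar>y - z\<bar>)" and "0 \<le> t"
  then have "continuous_on {0..} (\<lambda>s. semigroup M X s Ag x)"
    using semigroup_continuous_on[OF assms] by (auto simp: ext_gen_def)
  with hyps \<open>0 \<le> t\<close> show "((\<lambda>s. semigroup M X s g x) has_real_derivative semigroup M X t Ag x) (at t within {0..})"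
    using semigroup_has_real_derivative[OF assms] by blast
qed

end
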